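(* Let $\mathcal F=\{F^c_{t,k}\}$ be an F-system and $R,\lambda$ reals such that $|F^A_t\cup F^B_t|\le Rt+\lambda$ for every positive integer $t$. Then for every positive integer $t$, $|S_t|\ge(2-R)t-\lambda$.
   Context: F-system: a family $\mathcal F=\{F^c_{t,k}\}$ of sets of positive integers, indexed by $c\in\{A,B\}$ and integers $0<k\le t$, such that (F1) $|F^c_{t,k}|\ge k$ for all $c,t,k$; and (F2) $F^A_{t,k}\cap F^B_{t',k'}=\emptyset$ for all $k\le t$, $k'\le t'$ with $k+k'\le\max(t,t')$. Notation: $F^c_t=\bigcup_{0<\kappa\le\tau\le t}F^c_{\tau,\kappa}$ for $c\in\{A,B\}$, and $S_t=F^A_t\cap F^B_t$. *)

theory Defs
  imports Complex_Main
begin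

text \<open>An F-system: F c t k for c in {A,B} (A = True, B = False) and 0 < k <= t,
  sets of positive integers. Only the values with 0 < k <= t matter.\<close>

type_synonym fsys = "bool \<Rightarrow> nat \<Rightarrow> nat \<Rightarrow> nat set"

definition F_system :: "fsys \<Rightarrow> bool" where
  "F_system F \<longleftrightarrow>
     (\<forall>c t k. 0 < k \<and> k \<le> t \<longrightarrow> F c t k \<subseteq> {0<..}) \<and>
     (\<forall>c t k. 0 < k \<and> k \<le> t \<longrightarrow> (\<exists>Y. Y \<subseteq> F c t k \<and> finite Y \<and> card Y = k)) \<and>
     (\<forall>t k t' k'. 0 < k \<and> k \<le> t \<and> 0 < k' \<and> k' \<le> t' \<and> k + k' \<le> max t t'
        \<longrightarrow> F True t k \<inter> F False t' k' = {})"

definition Fu :: "fsys \<Rightarrow> bool \<Rightarrow> nat \<Rightarrow> nat set" where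
  "Fu F c t = (\<Union>\<tau>\<in>{1..t}. \<Union>\<kappa>\<in>{1..\<tau>}. F c \<tau> \<kappa>)"

definition St :: "fsys \<Rightarrow> nat \<Rightarrow> nat set" where
  "St F t = Fu F True t \<inter> Fu F False t"

end

theory Submission
  imports Defs
begin

(* The intersection S_t = F^A_t \<inter> F^B_t is large by inclusion-exclusion:
   |F^A_t| + |F^B_t| = |F^A_t \<union> F^B_t| + |S_t|.  Each union F^c_t contains
   the set F^c_{t,t}, which by (F1) has at least t elements, so the left side
   is at least 2t, while the hypothesis bounds |F^A_t \<union> F^B_t| by R t + \<lambda>. *)

lemma top_member_subset_Fu:
  assumes "0 < t"
  shows "F c t t \<subseteq> Fu F c t"
  unfolding Fu_def using assms by force

lemma card_Fu_lower_bound: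
  assumes "F_system F" "0 < t" "finite (Fu F c t)"
  shows "t \<le> card (Fu F c t)"
proof -
  obtain Y where Y: "Y \<subseteq> F c t t" "card Y = t"
    using assms(1,2) unfolding F_system_def by blast
  have "Y \<subseteq> Fu F c t"
    using Y(1) top_member_subset_Fu[OF assms(2)] by blast
  then show ?thesis
    using Y(2) card_mono[OF assms(3)] by blast
qed

lemma card_Int_lower_bound:
  assumes "finite X" "finite Y" "a \<le> card X" "b \<le> card Y"
  shows "real a + real b - real (card (X \<union> Y)) \<le> real (card (X \<inter> Y))"
proof -
  have "card X + card Y = card (X \<union> Y) + card (X \<inter> Y)"
    using card_Un_Int[OF assms(1,2)] .
  then have "real (card X) + real (card Y) = real (card (X \<union> Y)) + real (card (X \<inter> Y))"
    by (metis of_nat_add)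
  with assms(3,4) show ?thesis by linarith
qed

theorem lemma2:
  fixes F :: fsys and R lam :: real
  assumes "F_system F"
    and "\<And>t. 0 < t \<Longrightarrow> finite (Fu F True t \<union> Fu F False t)
                 \<and> real (card (Fu F True t \<union> Fu F False t)) \<le> R * real t + lam"
  shows "\<forall>t. 0 < t \<longrightarrow> real (card (St F t)) \<ge> (2 - R) * real t - lam"
proof (intro allI impI)
  fix t :: nat
  assume t: "0 < t"
  have fin_A: "finite (Fu F True t)" and fin_B: "finite (Fu F False t)"
    and union_bound: "real (card (Fu F True t \<union> Fu F False t)) \<le> R * real t + lam"
    using assms(2)[OF t] by auto
  have "real t + real t - real (card (Fu F True t \<union> Fu F False t)) \<le> real (card (St F t))"
    unfolding St_def
    using card_Int_lower_bound[OF fin_A fin_B card_Fu_lower_bound[OF assms(1) t fin_A]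
                                     card_Fu_lower_bound[OF assms(1) t fin_B]] .
  with union_bound show "real (card (St F t)) \<ge> (2 - R) * real t - lam"
    by (simp add: algebra_simps)
qed

end
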